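(* Let $a<b$, $n\in\mathbb{N}$, $h=\frac{b-a}{n}$ and $x_k=a+k\frac{b-a}{n}$ for $k=0,\dots,n$. Let $f:[a,b]\to\mathbb{R}$ be convex. For $j=1,\dots,n$ and $t\in[0,1]$ define \[ H_j(t)=\frac1h\int_{x_{j-1}}^{x_j} f\left(tu+(1-t)\frac{x_{j-1}+x_j}{2}\right)du, \] \[ F_j(t)=\frac{1}{2h}\int_{x_{j-1}}^{x_j}\left[f\left(\frac{1+t}{2}x_{j-1}+\frac{1-t}{2}u\right)+f\left(\frac{1+t}{2}x_j+\frac{1-t}{2}u\right)\right]du, \] and $H(t)=\sum_{j=1}^n H_j(t)$, $F(t)=\sum_{j=1}^n F_j(t)$ for $t\in[0,1]$. Then: (1) $H$ and $F$ are convex on $[0,1]$; (2) $H$ and $F$ are monotonic nondecreasing on $[0,1]$; (3) $\sup_{t\in[0,1]}H(t)=\frac1h\int_a^b f(u)\,du=H(1)$ and $\inf_{t\in[0,1]}H(t)=\sum_{k=1}^n f\left(\frac{x_{k-1}+x_k}{2}\right)=H(0)$; and $\sup_{t\in[0,1]}F(t)=\frac12\left[f(a)+2\sum_{k=1}^{n-1}f(x_k)+f(b)\right]=F(1)$ and $\inf_{t\in[0,1]}F(t)=\frac1h\int_a^b f(u)\,du=F(0)$. *)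

theory Defs
  imports "HOL-Analysis.Analysis"
begin

definition grid_pt :: "real \<Rightarrow> real \<Rightarrow> nat \<Rightarrow> nat \<Rightarrow> real" where
  "grid_pt a b n k = a + real k * ((b - a) / real n)"

definition Hj :: "(real \<Rightarrow> real) \<Rightarrow> real \<Rightarrow> real \<Rightarrow> nat \<Rightarrow> nat \<Rightarrow> real \<Rightarrow> real" where
  "Hj f a b n j t =
     (let h = (b - a) / real n; x0 = grid_pt a b n (j - 1); x1 = grid_pt a b n j in
      (1 / h) * integral {x0..x1} (\<lambda>u. f (t * u + (1 - t) * ((x0 + x1) / 2))))"

definition Fj :: "(real \<Rightarrow> real) \<Rightarrow> real \<Rightarrow> real \<Rightarrow> nat \<Rightarrow> nat \<Rightarrow> real \<Rightarrow> real" where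
  "Fj f a b n j t =
     (let h = (b - a) / real n; x0 = grid_pt a b n (j - 1); x1 = grid_pt a b n j in
      (1 / (2 * h)) * integral {x0..x1}
        (\<lambda>u. f ((1 + t) / 2 * x0 + (1 - t) / 2 * u) + f ((1 + t) / 2 * x1 + (1 - t) / 2 * u)))"

definition HH :: "(real \<Rightarrow> real) \<Rightarrow> real \<Rightarrow> real \<Rightarrow> nat \<Rightarrow> real \<Rightarrow> real" where
  "HH f a b n t = (\<Sum>j=1..n. Hj f a b n j t)"

definition FF :: "(real \<Rightarrow> real) \<Rightarrow> real \<Rightarrow> real \<Rightarrow> nat \<Rightarrow> real \<Rightarrow> real" where
  "FF f a b n t = (\<Sum>j=1..n. Fj f a b n j t)"

end

theory Submission
  imports Defs
begin

text \<open>For fixed \<open>u\<close> the integrands of \<open>H\<^sub>j\<close> and \<open>F\<^sub>j\<close> are \<open>f\<close> composed with a map affine in \<open>t\<close>,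
  so integrating in \<open>u\<close> gives functions convex in \<open>t\<close>. For monotonicity, pair each \<open>u\<close> with its
  reflection \<open>x\<^sub>j\<^sub>-\<^sub>1 + x\<^sub>j - u\<close> in the cell: the pair of integrand values becomes a sum
  \<open>f (m + y) + f (m - y)\<close> about the cell midpoint \<open>m\<close> with \<open>\<bar>y\<bar>\<close> increasing in \<open>t\<close>, and such symmetric
  sums of a convex function grow with \<open>\<bar>y\<bar>\<close>. Monotonicity makes the supremum and infimum the
  values at \<open>t = 1\<close> and \<open>t = 0\<close>, which are computed directly; for \<open>F (0)\<close> the substitution
  \<open>u \<mapsto> (u + x\<^sub>j\<^sub>-\<^sub>1) / 2\<close>, resp. \<open>(u + x\<^sub>j) / 2\<close>, maps the cell onto its two halves.\<close>

lemma convex_on_affine_comp: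
  fixes f :: "real \<Rightarrow> real" and S T :: "real set"
  assumes f: "convex_on S f" and T: "convex T" and maps: "\<And>u. u \<in> T \<Longrightarrow> \<alpha> * u + \<beta> \<in> S"
  shows "convex_on T (\<lambda>u. f (\<alpha> * u + \<beta>))"
proof (rule convex_onI[OF _ T])
  fix t x y :: real assume t: "t > 0" "t < 1" and xy: "x \<in> T" "y \<in> T"
  have "\<alpha> * ((1 - t) * x + t * y) + \<beta> = (1 - t) * (\<alpha> * x + \<beta>) + t * (\<alpha> * y + \<beta>)"
    by algebra
  then show "f (\<alpha> * ((1 - t) *\<^sub>R x + t *\<^sub>R y) + \<beta>) \<le> (1 - t) * f (\<alpha> * x + \<beta>) + t * f (\<alpha> * y + \<beta>)"
    using convex_onD[OF f, of t "\<alpha> * x + \<beta>" "\<alpha> * y + \<beta>"] maps[OF xy(1)] maps[OF xy(2)] t by simp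
qed

lemma convex_comb_in_Icc:
  fixes t u v p q :: real
  assumes "t \<in> {0..1}" "u \<in> {p..q}" "v \<in> {p..q}"
  shows "t * u + (1 - t) * v \<in> {p..q}"
proof -
  have "t * p \<le> t * u" "(1 - t) * p \<le> (1 - t) * v" "t * u \<le> t * q" "(1 - t) * v \<le> (1 - t) * q"
    using assms by (auto intro: mult_left_mono)
  then show ?thesis by (auto simp: algebra_simps)
qed

text \<open>\<open>m \<pm> y\<close> are convex combinations of \<open>m \<pm> z\<close> with swapped weights.\<close>

lemma convex_on_symmetric_sum_mono_nonneg:
  fixes f :: "real \<Rightarrow> real"
  assumes f: "convex_on {a..b} f" and yz: "0 \<le> y" "y \<le> z" and ends: "a \<le> m - z" "m + z \<le> b"
  shows "f (m + y) + f (m - y) \<le> f (m + z) + f (m - z)"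
proof (cases "z = 0")
  case True
  then show ?thesis using yz by simp
next
  case False
  with yz have z: "z > 0" by simp
  define l where "l = (z - y) / (2 * z)"
  have l: "0 \<le> l" "l \<le> 1" using yz z by (auto simp: l_def field_simps)
  have plus: "m + y = (1 - l) * (m + z) + l * (m - z)"
   and minus: "m - y = (1 - l) * (m - z) + l * (m + z)"
    using z by (simp_all add: l_def field_simps)
  have mem: "m + z \<in> {a..b}" "m - z \<in> {a..b}" using yz ends by auto
  have "f (m + y) \<le> (1 - l) * f (m + z) + l * f (m - z)"
    using convex_onD[OF f, of l "m + z" "m - z"] l mem plus by simp
  moreover have "f (m - y) \<le> (1 - l) * f (m - z) + l * f (m + z)"
    using convex_onD[OF f, of l "m - z" "m + z"] l mem minus by simp
  ultimately show ?thesis by (simp add: algebra_simps)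
qed

lemma convex_on_symmetric_sum_mono:
  fixes f :: "real \<Rightarrow> real"
  assumes f: "convex_on {a..b} f" and yz: "\<bar>y\<bar> \<le> \<bar>z\<bar>" and ends: "a \<le> m - \<bar>z\<bar>" "m + \<bar>z\<bar> \<le> b"
  shows "f (m + y) + f (m - y) \<le> f (m + z) + f (m - z)"
proof -
  have abs_sum: "f (m + \<bar>w\<bar>) + f (m - \<bar>w\<bar>) = f (m + w) + f (m - w)" for w
    by (cases "w \<ge> 0") auto
  show ?thesis
    using convex_on_symmetric_sum_mono_nonneg[OF f _ yz ends] unfolding abs_sum by simp
qed

lemma convex_on_integrable_on:
  fixes g :: "real \<Rightarrow> real"
  assumes g: "convex_on {p..q} g"
  shows "g integrable_on {p..q}"
proof (cases "p < q")
  case False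
  then show ?thesis using integrable_on_null[of p q g] by simp
next
  case True
  define M where "M = 2 * \<bar>g ((p + q) / 2)\<bar> + \<bar>g p\<bar> + \<bar>g q\<bar>"
  have upper: "g x \<le> \<bar>g p\<bar> + \<bar>g q\<bar>" if "x \<in> {p..q}" for x
    using convex_on_le_max[OF g that] by linarith
  have bounded: "norm (g x) \<le> M" if x: "x \<in> {p..q}" for x
  proof -
    have x': "p + q - x \<in> {p..q}" using x by auto
    have mid: "(1 - 1/2) *\<^sub>R x + (1/2) *\<^sub>R (p + q - x) = (p + q) / 2"
      by (simp add: field_simps)
    have "g ((p + q) / 2) \<le> (1 - 1/2) * g x + 1/2 * g (p + q - x)"
      using convex_onD[OF g, of "1/2" x "p + q - x"] x x' unfolding mid by simp
    then show ?thesis using upper[OF x] upper[OF x'] by (simp add: M_def)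
  qed
  have cont: "continuous_on {p<..<q} g"
    by (rule convex_on_continuous, simp, rule convex_on_subset[OF g]) auto
  have "g integrable_on {p<..<q}"
  proof (rule measurable_bounded_by_integrable_imp_integrable[where g="\<lambda>_. M"])
    show "g \<in> borel_measurable (lebesgue_on {p<..<q})"
      by (rule continuous_imp_measurable_on_sets_lebesgue[OF cont]) auto
    show "(\<lambda>_. M) integrable_on {p<..<q}"
      using integrable_on_open_interval_real integrable_const_ivl by blast
  qed (use bounded in auto)
  then show ?thesis using integrable_on_open_interval_real by blast
qed

lemma integrable_on_reflect_Icc:
  fixes g :: "real \<Rightarrow> real"
  assumes "g integrable_on {p..q}"
  shows "(\<lambda>u. g (p + q - u)) integrable_on {p..q}"
proof -
  have "(\<lambda>y. g (- y)) integrable_on {-q..-p}" using assms by simp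
  from integrable_shift_real_ivl[OF this, of "- (p + q)"] show ?thesis by (simp add: add.commute)
qed

lemma integral_reflect_Icc:
  fixes g :: "real \<Rightarrow> real"
  shows "integral {p..q} (\<lambda>u. g (p + q - u)) = integral {p..q} g"
  using integral_shift_real_ivl[of "-q" "- (p + q)" "-p" "\<lambda>y. g (- y)"] by (simp add: add.commute)

lemma convex_on_integral_param:
  fixes G :: "real \<Rightarrow> real \<Rightarrow> real"
  assumes T: "convex T"
    and int: "\<And>t. t \<in> T \<Longrightarrow> G t integrable_on S"
    and cv: "\<And>u. u \<in> S \<Longrightarrow> convex_on T (\<lambda>t. G t u)"
  shows "convex_on T (\<lambda>t. integral S (G t))"
proof (rule convex_onI[OF _ T])
  fix t x y :: real assume t: "t > 0" "t < 1" and xy: "x \<in> T" "y \<in> T"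
  have z: "(1 - t) * x + t * y \<in> T"
    using convexD[OF T xy, of "1 - t" t] t by simp
  have "integral S (G ((1 - t) * x + t * y)) \<le> integral S (\<lambda>u. (1 - t) * G x u + t * G y u)"
    using convex_onD[OF cv, of _ t x y] t xy
    by (intro integral_le int[OF z] integrable_add integrable_on_mult_right int) auto
  also have "\<dots> = (1 - t) * integral S (G x) + t * integral S (G y)"
    using int xy by (simp add: integral_add integrable_on_mult_right)
  finally show "integral S (G ((1 - t) *\<^sub>R x + t *\<^sub>R y)) \<le> (1 - t) * integral S (G x) + t * integral S (G y)"
    by simp
qed

lemma mono_on_integral_param_reflect:
  fixes G :: "real \<Rightarrow> real \<Rightarrow> real"
  assumes int: "\<And>t. t \<in> T \<Longrightarrow> G t integrable_on {p..q}"
    and sym_mono: "\<And>u s t. u \<in> {p..q} \<Longrightarrow> s \<in> T \<Longrightarrow> t \<in> T \<Longrightarrow> s \<le> t \<Longrightarrow>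
               G s u + G s (p + q - u) \<le> G t u + G t (p + q - u)"
  shows "mono_on T (\<lambda>t. integral {p..q} (G t))"
proof (rule mono_onI)
  fix s t assume st: "s \<in> T" "t \<in> T" "s \<le> t"
  have double: "2 * integral {p..q} (G r) = integral {p..q} (\<lambda>u. G r u + G r (p + q - u))"
    if "r \<in> T" for r
    using integral_add[OF int[OF that] integrable_on_reflect_Icc[OF int[OF that]]]
    by (simp add: integral_reflect_Icc)
  have "integral {p..q} (\<lambda>u. G s u + G s (p + q - u)) \<le> integral {p..q} (\<lambda>u. G t u + G t (p + q - u))"
    using st by (intro integral_le integrable_add int integrable_on_reflect_Icc sym_mono) auto
  then show "integral {p..q} (G s) \<le> integral {p..q} (G t)"
    using double[OF st(1)] double[OF st(2)] by simp
qed

lemma integral_half_affine: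
  fixes f :: "real \<Rightarrow> real"
  assumes "f integrable_on {(p + c) / 2..(q + c) / 2}"
  shows "integral {p..q} (\<lambda>u. f ((u + c) / 2)) = 2 * integral {(p + c) / 2..(q + c) / 2} f"
proof -
  define I where "I = integral {(p + c) / 2..(q + c) / 2} f"
  have "(f has_integral I) (cbox ((p + c) / 2) ((q + c) / 2))"
    using assms by (simp add: I_def integrable_integral)
  from has_integral_affinity'[OF this, of "1/2" "c/2"]
  have "((\<lambda>u. f ((1/2) *\<^sub>R u + c/2)) has_integral (I /\<^sub>R (1/2) ^ DIM(real)))
          (cbox (((p + c) / 2 - c/2) /\<^sub>R (1/2)) (((q + c) / 2 - c/2) /\<^sub>R (1/2)))"
    by simp
  moreover have "(\<lambda>u. f ((1/2) *\<^sub>R u + c/2)) = (\<lambda>u. f ((u + c) / 2))"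
    by (simp add: add_divide_distrib)
  moreover have "((p + c) / 2 - c/2) /\<^sub>R (1/2) = p" "((q + c) / 2 - c/2) /\<^sub>R (1/2) = q"
    by (simp_all add: field_simps)
  ultimately have "((\<lambda>u. f ((u + c) / 2)) has_integral 2 * I) {p..q}"
    by simp
  then show ?thesis unfolding I_def by (rule integral_unique)
qed

lemma mono_on_cdiv:
  fixes g :: "real \<Rightarrow> real"
  assumes "mono_on S g" "c \<ge> 0"
  shows "mono_on S (\<lambda>t. g t / c)"
  using assms unfolding mono_on_def by (auto intro: divide_right_mono)

lemma convex_on_sum_fun:
  fixes g :: "'i \<Rightarrow> real \<Rightarrow> real"
  assumes "finite I" "convex S" "\<And>i. i \<in> I \<Longrightarrow> convex_on S (g i)"
  shows "convex_on S (\<lambda>t. \<Sum>i\<in>I. g i t)"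
  using assms by (induction I rule: finite_induct) (auto intro!: convex_on_add simp: convex_on_const)

lemma mono_on_sum_fun:
  fixes g :: "'i \<Rightarrow> real \<Rightarrow> real"
  assumes "\<And>i. i \<in> I \<Longrightarrow> mono_on S (g i)"
  shows "mono_on S (\<lambda>t. \<Sum>i\<in>I. g i t)"
  using assms by (intro mono_onI sum_mono) (auto simp: mono_on_def)

lemma mono_on_SUP_INF_Icc:
  fixes g :: "real \<Rightarrow> real"
  assumes "mono_on {lo..hi} g" "lo \<le> hi"
  shows "(SUP t\<in>{lo..hi}. g t) = g hi" "(INF t\<in>{lo..hi}. g t) = g lo"
  using assms by (auto intro!: cSup_eq_maximum cInf_eq_minimum simp: mono_on_def)

definition H_map :: "(real \<Rightarrow> real) \<Rightarrow> real \<Rightarrow> real \<Rightarrow> real \<Rightarrow> real" where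
  "H_map f p q t = integral {p..q} (\<lambda>u. f (t * u + (1 - t) * ((p + q) / 2))) / (q - p)"

definition F_map :: "(real \<Rightarrow> real) \<Rightarrow> real \<Rightarrow> real \<Rightarrow> real \<Rightarrow> real" where
  "F_map f p q t = integral {p..q}
     (\<lambda>u. f ((1 + t) / 2 * p + (1 - t) / 2 * u) + f ((1 + t) / 2 * q + (1 - t) / 2 * u)) / (2 * (q - p))"

lemma convex_on_H_map_integrand:
  fixes f :: "real \<Rightarrow> real"
  assumes f: "convex_on {p..q} f" and t: "t \<in> {0..1}"
  shows "convex_on {p..q} (\<lambda>u. f (t * u + (1 - t) * ((p + q) / 2)))"
proof (rule convex_on_affine_comp[OF f])
  fix u assume "u \<in> {p..q}"
  then show "t * u + (1 - t) * ((p + q) / 2) \<in> {p..q}"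
    using convex_comb_in_Icc[OF t, of u p q "(p + q) / 2"] by auto
qed simp

lemma convex_on_H_map:
  fixes f :: "real \<Rightarrow> real"
  assumes f: "convex_on {p..q} f" and pq: "p \<le> q"
  shows "convex_on {0..1} (H_map f p q)"
proof -
  define c where "c = (p + q) / 2"
  have c: "c \<in> {p..q}" using pq by (simp add: c_def)
  have "convex_on {0..1} (\<lambda>t. integral {p..q} (\<lambda>u. f (t * u + (1 - t) * c)))"
  proof (rule convex_on_integral_param)
    show "(\<lambda>u. f (t * u + (1 - t) * c)) integrable_on {p..q}" if "t \<in> {0..1}" for t
      using convex_on_integrable_on[OF convex_on_H_map_integrand[OF f that]] by (simp add: c_def)
    fix u assume u: "u \<in> {p..q}"
    have "convex_on {0..1} (\<lambda>t. f ((u - c) * t + c))"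
    proof (rule convex_on_affine_comp[OF f])
      fix t :: real assume "t \<in> {0..1}"
      then show "(u - c) * t + c \<in> {p..q}"
        using convex_comb_in_Icc[of t u p q c] u c by (simp add: algebra_simps)
    qed simp
    then show "convex_on {0..1} (\<lambda>t. f (t * u + (1 - t) * c))"
      by (simp add: algebra_simps)
  qed simp
  then show ?thesis
    using pq by (simp add: H_map_def[abs_def] c_def convex_on_cdiv)
qed

lemma mono_on_H_map:
  fixes f :: "real \<Rightarrow> real"
  assumes f: "convex_on {p..q} f" and pq: "p \<le> q"
  shows "mono_on {0..1} (H_map f p q)"
proof -
  define c where "c = (p + q) / 2"
  have "mono_on {0..1} (\<lambda>t. integral {p..q} (\<lambda>u. f (t * u + (1 - t) * c)))"
  proof (rule mono_on_integral_param_reflect)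
    show "(\<lambda>u. f (t * u + (1 - t) * c)) integrable_on {p..q}" if "t \<in> {0..1}" for t
      using convex_on_integrable_on[OF convex_on_H_map_integrand[OF f that]] by (simp add: c_def)
    fix u s t :: real assume u: "u \<in> {p..q}" and st: "s \<in> {0..1}" "t \<in> {0..1}" "s \<le> t"
    have "\<bar>t * (u - c)\<bar> \<le> \<bar>u - c\<bar>"
      using st by (simp add: abs_mult mult_left_le_one_le)
    moreover have "\<bar>u - c\<bar> \<le> (q - p) / 2"
      using u by (auto simp: c_def abs_if field_simps)
    ultimately have ends: "p \<le> c - \<bar>t * (u - c)\<bar>" "c + \<bar>t * (u - c)\<bar> \<le> q"
      by (auto simp: c_def field_simps)
    have le: "\<bar>s * (u - c)\<bar> \<le> \<bar>t * (u - c)\<bar>"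
      using st by (simp add: abs_mult mult_right_mono)
    have args: "c + r * (u - c) = r * u + (1 - r) * c"
      "c - r * (u - c) = r * (p + q - u) + (1 - r) * c" for r
      by (simp_all add: c_def field_simps)
    show "f (s * u + (1 - s) * c) + f (s * (p + q - u) + (1 - s) * c)
        \<le> f (t * u + (1 - t) * c) + f (t * (p + q - u) + (1 - t) * c)"
      using convex_on_symmetric_sum_mono[OF f le ends] unfolding args .
  qed
  then show ?thesis
    using pq by (simp add: H_map_def[abs_def] c_def mono_on_cdiv)
qed

lemma H_map_0:
  fixes f :: "real \<Rightarrow> real"
  assumes "p < q"
  shows "H_map f p q 0 = f ((p + q) / 2)"
  using assms by (simp add: H_map_def)

lemma H_map_1: "H_map f p q 1 = integral {p..q} f / (q - p)"
  by (simp add: H_map_def)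

lemma F_map_point_in_Icc:
  fixes t u w p q :: real
  assumes "t \<in> {0..1}" "u \<in> {p..q}" "w \<in> {p..q}"
  shows "(1 + t) / 2 * w + (1 - t) / 2 * u \<in> {p..q}"
proof -
  have eq: "(1 + t) / 2 * w + (1 - t) / 2 * u = (1 + t) / 2 * w + (1 - (1 + t) / 2) * u"
    by (simp add: field_simps)
  show ?thesis
    unfolding eq by (rule convex_comb_in_Icc) (use assms in auto)
qed

lemma convex_on_F_map_integrand:
  fixes f :: "real \<Rightarrow> real"
  assumes f: "convex_on {p..q} f" and pq: "p \<le> q" and t: "t \<in> {0..1}"
  shows "convex_on {p..q} (\<lambda>u. f ((1 + t) / 2 * p + (1 - t) / 2 * u) + f ((1 + t) / 2 * q + (1 - t) / 2 * u))"
proof -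
  have "convex_on {p..q} (\<lambda>u. f ((1 - t) / 2 * u + (1 + t) / 2 * w))" if "w \<in> {p..q}" for w
    by (rule convex_on_affine_comp[OF f])
       (use F_map_point_in_Icc[OF t _ that] in \<open>auto simp: add.commute\<close>)
  from convex_on_add[OF this this] pq show ?thesis by (simp add: add.commute)
qed

lemma convex_on_F_map_pair_mono:
  fixes f :: "real \<Rightarrow> real"
  assumes f: "convex_on {p..q} f" and v: "v \<in> {p..q}" and st: "s \<in> {0..1}" "t \<in> {0..1}" "s \<le> t"
  shows "f ((1 + s) / 2 * p + (1 - s) / 2 * v) + f ((1 + s) / 2 * q + (1 - s) / 2 * (p + q - v))
       \<le> f ((1 + t) / 2 * p + (1 - t) / 2 * v) + f ((1 + t) / 2 * q + (1 - t) / 2 * (p + q - v))"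
proof -
  define m where "m = (p + q) / 2"
  define y where "y r = (q - v) / 2 + r * (v - p) / 2" for r
  have args: "m - y r = (1 + r) / 2 * p + (1 - r) / 2 * v"
    "m + y r = (1 + r) / 2 * q + (1 - r) / 2 * (p + q - v)" for r
    by (simp_all add: m_def y_def field_simps)
  have "0 \<le> y s" using v st by (simp add: y_def)
  moreover have "y s \<le> y t"
    using v st by (simp add: y_def divide_right_mono mult_right_mono)
  moreover have "t * (v - p) \<le> v - p"
    using v st by (simp add: mult_left_le_one_le)
  then have "y t \<le> (q - p) / 2" by (simp add: y_def field_simps)
  ultimately have le: "\<bar>y s\<bar> \<le> \<bar>y t\<bar>" and ends: "p \<le> m - \<bar>y t\<bar>" "m + \<bar>y t\<bar> \<le> q"
    by (auto simp: m_def field_simps)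
  show ?thesis
    using convex_on_symmetric_sum_mono[OF f le ends] unfolding args by (simp add: add.commute)
qed

lemma convex_on_F_map:
  fixes f :: "real \<Rightarrow> real"
  assumes f: "convex_on {p..q} f" and pq: "p \<le> q"
  shows "convex_on {0..1} (F_map f p q)"
proof -
  have "convex_on {0..1} (\<lambda>t. integral {p..q}
          (\<lambda>u. f ((1 + t) / 2 * p + (1 - t) / 2 * u) + f ((1 + t) / 2 * q + (1 - t) / 2 * u)))"
  proof (rule convex_on_integral_param)
    show "(\<lambda>u. f ((1 + t) / 2 * p + (1 - t) / 2 * u) + f ((1 + t) / 2 * q + (1 - t) / 2 * u))
            integrable_on {p..q}" if "t \<in> {0..1}" for t
      by (rule convex_on_integrable_on[OF convex_on_F_map_integrand[OF f pq that]])
    fix u assume u: "u \<in> {p..q}"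
    have "convex_on {0..1} (\<lambda>t. f ((1 + t) / 2 * w + (1 - t) / 2 * u))" if w: "w \<in> {p..q}" for w
    proof -
      have "(1 + t) / 2 * w + (1 - t) / 2 * u = (w - u) / 2 * t + (w + u) / 2" for t :: real
        by (simp add: field_simps)
      moreover have "convex_on {0..1} (\<lambda>t. f ((w - u) / 2 * t + (w + u) / 2))"
        using F_map_point_in_Icc[of _ u p q w] u w
        by (intro convex_on_affine_comp[OF f]) (auto simp: field_simps)
      ultimately show ?thesis by simp
    qed
    from convex_on_add[OF this this] pq
    show "convex_on {0..1}
            (\<lambda>t. f ((1 + t) / 2 * p + (1 - t) / 2 * u) + f ((1 + t) / 2 * q + (1 - t) / 2 * u))"
      by simp
  qed simp
  then show ?thesis
    using pq by (simp add: F_map_def[abs_def] convex_on_cdiv)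
qed

lemma mono_on_F_map:
  fixes f :: "real \<Rightarrow> real"
  assumes f: "convex_on {p..q} f" and pq: "p \<le> q"
  shows "mono_on {0..1} (F_map f p q)"
proof -
  have "mono_on {0..1} (\<lambda>t. integral {p..q}
          (\<lambda>u. f ((1 + t) / 2 * p + (1 - t) / 2 * u) + f ((1 + t) / 2 * q + (1 - t) / 2 * u)))"
  proof (rule mono_on_integral_param_reflect)
    show "(\<lambda>u. f ((1 + t) / 2 * p + (1 - t) / 2 * u) + f ((1 + t) / 2 * q + (1 - t) / 2 * u))
            integrable_on {p..q}" if "t \<in> {0..1}" for t
      by (rule convex_on_integrable_on[OF convex_on_F_map_integrand[OF f pq that]])
    fix u s t :: real assume u: "u \<in> {p..q}" and st: "s \<in> {0..1}" "t \<in> {0..1}" "s \<le> t"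
    have u': "p + q - u \<in> {p..q}" using u by auto
    show "f ((1 + s) / 2 * p + (1 - s) / 2 * u) + f ((1 + s) / 2 * q + (1 - s) / 2 * u) +
          (f ((1 + s) / 2 * p + (1 - s) / 2 * (p + q - u)) + f ((1 + s) / 2 * q + (1 - s) / 2 * (p + q - u)))
        \<le> f ((1 + t) / 2 * p + (1 - t) / 2 * u) + f ((1 + t) / 2 * q + (1 - t) / 2 * u) +
          (f ((1 + t) / 2 * p + (1 - t) / 2 * (p + q - u)) + f ((1 + t) / 2 * q + (1 - t) / 2 * (p + q - u)))"
      using add_mono[OF convex_on_F_map_pair_mono[OF f u st] convex_on_F_map_pair_mono[OF f u' st]]
      by (simp add: algebra_simps)
  qed
  then show ?thesis
    using pq by (simp add: F_map_def[abs_def] mono_on_cdiv)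
qed

lemma F_map_1:
  fixes f :: "real \<Rightarrow> real"
  assumes "p < q"
  shows "F_map f p q 1 = (f p + f q) / 2"
proof -
  have "integral {p..q} (\<lambda>u. f p + f q) = (q - p) * (f p + f q)" "2 * q - 2 * p \<noteq> 0"
    using assms by simp_all
  then show ?thesis by (simp add: F_map_def field_simps)
qed

lemma F_map_0:
  fixes f :: "real \<Rightarrow> real"
  assumes f: "convex_on {p..q} f" and pq: "p \<le> q"
  shows "F_map f p q 0 = integral {p..q} f / (q - p)"
proof -
  have half_int: "(\<lambda>u. f ((u + c) / 2)) integrable_on {p..q}" if "c \<in> {p..q}" for c
  proof -
    have "convex_on {p..q} (\<lambda>u. f ((1/2) * u + c/2))"
      using that by (intro convex_on_affine_comp[OF f]) auto
    then show ?thesis by (simp add: convex_on_integrable_on add_divide_distrib)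
  qed
  have int: "f integrable_on {p..(p + q) / 2}" "f integrable_on {(p + q) / 2..q}"
    using pq by (auto intro: integrable_subinterval_real[OF convex_on_integrable_on[OF f]])
  have "integral {p..q} (\<lambda>u. f ((u + p) / 2) + f ((u + q) / 2))
      = integral {p..q} (\<lambda>u. f ((u + p) / 2)) + integral {p..q} (\<lambda>u. f ((u + q) / 2))"
    using pq by (intro integral_add half_int) auto
  also have "\<dots> = 2 * integral {p..(p + q) / 2} f + 2 * integral {(p + q) / 2..q} f"
    using integral_half_affine[of f p p q] integral_half_affine[of f p q q] int
    by (simp add: add.commute)
  also have "\<dots> = 2 * integral {p..q} f"
    using Henstock_Kurzweil_Integration.integral_combine[of p "(p + q) / 2" q f]
      convex_on_integrable_on[OF f] pq
    by simp
  finally have I: "integral {p..q} (\<lambda>u. f ((u + p) / 2) + f ((u + q) / 2)) = 2 * integral {p..q} f" .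
  have "F_map f p q 0 = integral {p..q} (\<lambda>u. f ((u + p) / 2) + f ((u + q) / 2)) / (2 * (q - p))"
    by (simp add: F_map_def add_divide_distrib add.commute)
  also have "\<dots> = integral {p..q} f / (q - p)"
    unfolding I by (subst mult_divide_mult_cancel_left_if) simp
  finally show ?thesis .
qed

lemma sum_integral_consecutive:
  fixes f :: "real \<Rightarrow> real" and x :: "nat \<Rightarrow> real"
  assumes x: "mono x" and f: "f integrable_on {x 0..x m}"
  shows "(\<Sum>j=1..m. integral {x (j - 1)..x j} f) = integral {x 0..x m} f"
  using f
proof (induction m)
  case 0
  then show ?case by simp
next
  case (Suc m)
  have le: "x 0 \<le> x m" "x m \<le> x (Suc m)" using x by (auto simp: mono_def)
  then have "f integrable_on {x 0..x m}"
    by (intro integrable_subinterval_real[OF Suc.prems]) auto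
  with Suc.IH have "(\<Sum>j=1..Suc m. integral {x (j - 1)..x j} f)
      = integral {x 0..x m} f + integral {x m..x (Suc m)} f"
    by simp
  also have "\<dots> = integral {x 0..x (Suc m)} f"
    using Henstock_Kurzweil_Integration.integral_combine[OF le Suc.prems] .
  finally show ?case .
qed

lemma sum_consecutive_means:
  fixes g :: "nat \<Rightarrow> real"
  assumes "n \<ge> 1"
  shows "(\<Sum>j=1..n. (g (j - 1) + g j) / 2) = (1 / 2) * (g 0 + 2 * (\<Sum>k=1..n-1. g k) + g n)"
proof -
  obtain m where n: "n = Suc m" using assms by (cases n) auto
  have "(\<Sum>j=1..Suc m. (g (j - 1) + g j) / 2) = (1 / 2) * (g 0 + 2 * (\<Sum>k=1..m. g k) + g (Suc m))"
    by (induction m) (simp_all add: field_simps)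
  then show ?thesis by (simp add: n)
qed

lemma grid_pt_0 [simp]: "grid_pt a b n 0 = a"
  by (simp add: grid_pt_def)

lemma grid_pt_last: "n \<noteq> 0 \<Longrightarrow> grid_pt a b n n = b"
  by (simp add: grid_pt_def)

lemma grid_pt_step: "j \<ge> 1 \<Longrightarrow> grid_pt a b n j - grid_pt a b n (j - 1) = (b - a) / real n"
  by (simp add: grid_pt_def of_nat_diff left_diff_distrib diff_divide_distrib)

lemma mono_grid_pt: "a \<le> b \<Longrightarrow> mono (grid_pt a b n)"
  unfolding mono_def grid_pt_def by (auto intro!: divide_right_mono mult_right_mono)

lemma grid_cell_in_Icc:
  assumes ab: "a < b" and j: "j \<in> {1..n}"
  shows "a \<le> grid_pt a b n (j - 1)" "grid_pt a b n (j - 1) < grid_pt a b n j" "grid_pt a b n j \<le> b"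
proof -
  have mono: "mono (grid_pt a b n)" using ab by (simp add: mono_grid_pt)
  show "a \<le> grid_pt a b n (j - 1)" using monoD[OF mono, of 0 "j - 1"] by simp
  show "grid_pt a b n j \<le> b" using monoD[OF mono, of j n] j by (simp add: grid_pt_last)
  have "(b - a) / real n > 0" using ab j by simp
  then show "grid_pt a b n (j - 1) < grid_pt a b n j" using grid_pt_step[of j a b n] j by simp
qed

lemma convex_on_grid_cell:
  assumes "convex_on {a..b} f" "a < b" "j \<in> {1..n}"
  shows "convex_on {grid_pt a b n (j - 1)..grid_pt a b n j} f"
  by (rule convex_on_subset[OF assms(1)]) (use grid_cell_in_Icc[OF assms(2,3)] in auto)

lemma Hj_eq_H_map:
  assumes "j \<ge> 1"
  shows "Hj f a b n j = H_map f (grid_pt a b n (j - 1)) (grid_pt a b n j)"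
  unfolding fun_eq_iff Hj_def H_map_def Let_def grid_pt_step[OF assms] by simp

lemma Fj_eq_F_map:
  assumes "j \<ge> 1"
  shows "Fj f a b n j = F_map f (grid_pt a b n (j - 1)) (grid_pt a b n j)"
  unfolding fun_eq_iff Fj_def F_map_def Let_def grid_pt_step[OF assms] by simp

lemma HH_eq_sum_H_map: "HH f a b n = (\<lambda>t. \<Sum>j=1..n. H_map f (grid_pt a b n (j - 1)) (grid_pt a b n j) t)"
  by (simp add: fun_eq_iff HH_def Hj_eq_H_map)

lemma FF_eq_sum_F_map: "FF f a b n = (\<lambda>t. \<Sum>j=1..n. F_map f (grid_pt a b n (j - 1)) (grid_pt a b n j) t)"
  by (simp add: fun_eq_iff FF_def Fj_eq_F_map)

lemma convex_on_HH:
  assumes "convex_on {a..b} f" "a < b"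
  shows "convex_on {0..1} (HH f a b n)"
  unfolding HH_eq_sum_H_map
  using assms convex_on_grid_cell grid_cell_in_Icc
  by (intro convex_on_sum_fun convex_on_H_map) (auto intro: less_imp_le)

lemma mono_on_HH:
  assumes "convex_on {a..b} f" "a < b"
  shows "mono_on {0..1} (HH f a b n)"
  unfolding HH_eq_sum_H_map
  using assms convex_on_grid_cell grid_cell_in_Icc
  by (intro mono_on_sum_fun mono_on_H_map) (auto intro: less_imp_le)

lemma convex_on_FF:
  assumes "convex_on {a..b} f" "a < b"
  shows "convex_on {0..1} (FF f a b n)"
  unfolding FF_eq_sum_F_map
  using assms convex_on_grid_cell grid_cell_in_Icc
  by (intro convex_on_sum_fun convex_on_F_map) (auto intro: less_imp_le)

lemma mono_on_FF:
  assumes "convex_on {a..b} f" "a < b"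
  shows "mono_on {0..1} (FF f a b n)"
  unfolding FF_eq_sum_F_map
  using assms convex_on_grid_cell grid_cell_in_Icc
  by (intro mono_on_sum_fun mono_on_F_map) (auto intro: less_imp_le)

lemma sum_integral_grid_cells:
  assumes f: "convex_on {a..b} f" and ab: "a < b" and n: "n \<ge> 1"
  shows "(\<Sum>j=1..n. integral {grid_pt a b n (j - 1)..grid_pt a b n j} f) = integral {a..b} f"
proof -
  have "mono (grid_pt a b n)" using ab by (simp add: mono_grid_pt)
  from sum_integral_consecutive[OF this, of f n] show ?thesis
    using convex_on_integrable_on[OF f] n by (simp add: grid_pt_last)
qed

lemma HH_1:
  assumes f: "convex_on {a..b} f" and ab: "a < b" and n: "n \<ge> 1"
  shows "HH f a b n 1 = integral {a..b} f / ((b - a) / real n)"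
proof -
  have "HH f a b n 1 = (\<Sum>j=1..n. integral {grid_pt a b n (j - 1)..grid_pt a b n j} f / ((b - a) / real n))"
    unfolding HH_eq_sum_H_map
  proof (intro sum.cong refl)
    fix j assume "j \<in> {1..n}"
    then show "H_map f (grid_pt a b n (j - 1)) (grid_pt a b n j) 1
        = integral {grid_pt a b n (j - 1)..grid_pt a b n j} f / ((b - a) / real n)"
      using grid_pt_step[of j a b n] by (simp add: H_map_1)
  qed
  also have "\<dots> = integral {a..b} f / ((b - a) / real n)"
    by (simp only: sum_divide_distrib[symmetric] sum_integral_grid_cells[OF f ab n])
  finally show ?thesis .
qed

lemma FF_0:
  assumes f: "convex_on {a..b} f" and ab: "a < b" and n: "n \<ge> 1"
  shows "FF f a b n 0 = integral {a..b} f / ((b - a) / real n)"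
proof -
  have "FF f a b n 0 = (\<Sum>j=1..n. integral {grid_pt a b n (j - 1)..grid_pt a b n j} f / ((b - a) / real n))"
    unfolding FF_eq_sum_F_map
  proof (intro sum.cong refl)
    fix j assume j: "j \<in> {1..n}"
    then show "F_map f (grid_pt a b n (j - 1)) (grid_pt a b n j) 0
        = integral {grid_pt a b n (j - 1)..grid_pt a b n j} f / ((b - a) / real n)"
      using grid_pt_step[of j a b n] F_map_0[OF convex_on_grid_cell[OF f ab j]] grid_cell_in_Icc[OF ab j]
      by simp
  qed
  also have "\<dots> = integral {a..b} f / ((b - a) / real n)"
    by (simp only: sum_divide_distrib[symmetric] sum_integral_grid_cells[OF f ab n])
  finally show ?thesis .
qed

lemma HH_0:
  assumes "a < b"
  shows "HH f a b n 0 = (\<Sum>k=1..n. f ((grid_pt a b n (k - 1) + grid_pt a b n k) / 2))"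
  using grid_cell_in_Icc[OF assms] by (simp add: HH_eq_sum_H_map H_map_0)

lemma FF_1:
  assumes "a < b" "n \<ge> 1"
  shows "FF f a b n 1 = (1 / 2) * (f a + 2 * (\<Sum>k=1..n-1. f (grid_pt a b n k)) + f b)"
  using grid_cell_in_Icc[OF assms(1)] sum_consecutive_means[OF assms(2), of "\<lambda>k. f (grid_pt a b n k)"] assms(2)
  by (simp add: FF_eq_sum_F_map F_map_1 grid_pt_last)

theorem proposition2p4:
  fixes f :: "real \<Rightarrow> real" and a b :: real and n :: nat
  assumes "a < b" and "n \<ge> 1" and "convex_on {a..b} f"
  defines "h \<equiv> (b - a) / real n"
      and "x \<equiv> grid_pt a b n"
      and "H \<equiv> HH f a b n"
      and "F \<equiv> FF f a b n"
  shows "(convex_on {0..1} H \<and> convex_on {0..1} F) \<and>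
         (mono_on {0..1} H \<and> mono_on {0..1} F) \<and>
         ((SUP t\<in>{0..1}. H t) = (1 / h) * integral {a..b} f \<and> (1 / h) * integral {a..b} f = H 1) \<and>
         ((INF t\<in>{0..1}. H t) = (\<Sum>k=1..n. f ((x (k - 1) + x k) / 2)) \<and>
         (\<Sum>k=1..n. f ((x (k - 1) + x k) / 2)) = H 0) \<and>
         ((SUP t\<in>{0..1}. F t) = (1 / 2) * (f a + 2 * (\<Sum>k=1..n-1. f (x k)) + f b) \<and>
         (1 / 2) * (f a + 2 * (\<Sum>k=1..n-1. f (x k)) + f b) = F 1) \<and>
         ((INF t\<in>{0..1}. F t) = (1 / h) * integral {a..b} f \<and> (1 / h) * integral {a..b} f = F 0)"
proof -
  have mono: "mono_on {0..1} H" "mono_on {0..1} F"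
    unfolding H_def F_def using assms(1,3) by (simp_all add: mono_on_HH mono_on_FF)
  have "convex_on {0..1} H" "convex_on {0..1} F"
    unfolding H_def F_def using assms(1,3) by (simp_all add: convex_on_HH convex_on_FF)
  moreover have "H 1 = (1 / h) * integral {a..b} f" "F 0 = (1 / h) * integral {a..b} f"
    unfolding H_def F_def h_def using HH_1 FF_0 assms(1-3) by simp_all
  moreover have "H 0 = (\<Sum>k=1..n. f ((x (k - 1) + x k) / 2))"
    unfolding H_def x_def using HH_0 assms(1) .
  moreover have "F 1 = (1 / 2) * (f a + 2 * (\<Sum>k=1..n-1. f (x k)) + f b)"
    unfolding F_def x_def using FF_1 assms(1,2) .
  ultimately show ?thesis
    using mono mono_on_SUP_INF_Icc[OF mono(1)] mono_on_SUP_INF_Icc[OF mono(2)] by simp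
qed

end
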